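(* Let $G=(V,E)$ be a transitive and finite directed graph with in-degree at least $2$ at every vertex, and let $v\in V$ have in-degree $d_v\ge3$. Then the $v$-lag $\widehat{G}_v$ (for any choice of ordering of incoming edges) is a finite transitive directed graph with in-degree at least $2$ at every vertex, and it has one fewer vertex of in-degree at least $3$ than $G$.
   Context: A directed graph $G=(V,E,r,s)$; in-degree of $v$ is $|r^{-1}(v)|$; a path $e_1\cdots e_n$ has $s(e_i)=r(e_{i+1})$, and "an edge from $u$ to $w$" has source $u$ and range $w$; $G$ is transitive if there is a path between any two vertices. The $v$-lag $\widehat{G}_v=(\widehat{V}_v,\widehat{E}_v)$ of $G$ at a vertex $v$ of in-degree $d_v\ge3$: enumerate the edges with range $v$ as $e_0,\dots,e_{d_v-1}$, with sources $u_0,\dots,u_{d_v-1}$ (repetitions allowed). Keep all vertices of $G$ and all edges not ranging in $v$. Add new vertices $v_1,\dots,v_{d_v-2}$, an edge $f_1$ from $v_1$ to $v$, and edges $f_i$ from $v_i$ to $v_{i-1}$ for $2\le i\le d_v-2$. Replace $e_0$ by an edge $\hat e_0$ from $u_0$ to $v$; replace $e_j$ by an edge $\hat e_j$ from $u_j$ to $v_j$ for $1\le j\le d_v-2$; replace $e_{d_v-1}$ by an edge $\hat e_{d_v-1}$ from $u_{d_v-1}$ to $v_{d_v-2}$. Thus $\widehat{V}_v=V\sqcup\{v_1,\dots,v_{d_v-2}\}$. *)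

theory Defs
  imports Main
begin

text \<open>A directed (multi)graph is given by a vertex set V, an edge set E, and
range / source maps r, s on edges.  An edge e goes from s e to r e.\<close>

definition digraph :: "'v set \<Rightarrow> 'e set \<Rightarrow> ('e \<Rightarrow> 'v) \<Rightarrow> ('e \<Rightarrow> 'v) \<Rightarrow> bool" where
  "digraph V E r s \<longleftrightarrow> (\<forall>e\<in>E. r e \<in> V \<and> s e \<in> V)"

definition in_degree :: "'e set \<Rightarrow> ('e \<Rightarrow> 'v) \<Rightarrow> 'v \<Rightarrow> nat" where
  "in_degree E r v = card {e \<in> E. r e = v}"

text \<open>Paths
e_1...e_n with s(e_i) = r(e_{i+1}) from u = s(e_n) to w = r(e_1) correspond to
the reflexive-transitive closure (length-0 paths being vertices).\<close>

definition edge_rel :: "'e set \<Rightarrow> ('e \<Rightarrow> 'v) \<Rightarrow> ('e \<Rightarrow> 'v) \<Rightarrow> ('v \<times> 'v) set" where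
  "edge_rel E r s = {(s e, r e) | e. e \<in> E}"

definition transitive_graph :: "'v set \<Rightarrow> 'e set \<Rightarrow> ('e \<Rightarrow> 'v) \<Rightarrow> ('e \<Rightarrow> 'v) \<Rightarrow> bool" where
  "transitive_graph V E r s \<longleftrightarrow> (\<forall>u\<in>V. \<forall>w\<in>V. (u, w) \<in> (edge_rel E r s)\<^sup>*)"

text \<open>The ordering of the incoming edges of v is a bijection
  ord from {0..<d_v} onto r^{-1}(v) (ord j = e_j).
  New vertices v_i are Inr i (1 \<le> i \<le> d_v - 2); old vertices are Inl u.
  New edges f_i are Inr i (1 \<le> i \<le> d_v - 2); each old edge e (including the
  replaced ones \<hat>e_j) is Inl e.\<close>

definition lag_V :: "'v set \<Rightarrow> 'e set \<Rightarrow> ('e \<Rightarrow> 'v) \<Rightarrow> 'v \<Rightarrow> ('v + nat) set" where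
  "lag_V V E r v = Inl ` V \<union> Inr ` {1 .. in_degree E r v - 2}"

definition lag_E :: "'e set \<Rightarrow> ('e \<Rightarrow> 'v) \<Rightarrow> 'v \<Rightarrow> ('e + nat) set" where
  "lag_E E r v = Inl ` E \<union> Inr ` {1 .. in_degree E r v - 2}"

definition lag_s :: "('e \<Rightarrow> 'v) \<Rightarrow> ('e + nat) \<Rightarrow> ('v + nat)" where
  "lag_s s x = (case x of Inl e \<Rightarrow> Inl (s e) | Inr i \<Rightarrow> Inr i)"

definition lag_r :: "'e set \<Rightarrow> ('e \<Rightarrow> 'v) \<Rightarrow> 'v \<Rightarrow> (nat \<Rightarrow> 'e) \<Rightarrow> ('e + nat) \<Rightarrow> ('v + nat)" where
  "lag_r E r v ord x = (case x of
      Inl e \<Rightarrow>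
        (if e \<in> E \<and> r e = v then
           (let d = in_degree E r v; j = the_inv_into {0..<d} ord e in
              if j = 0 then Inl v
              else if j \<le> d - 2 then Inr j
              else Inr (d - 2))
         else Inl (r e))
    | Inr i \<Rightarrow> (if i = 1 then Inl v else Inr (i - 1)))"

end

theory Submission
  imports Defs
begin

text \<open>In the lag, the \<open>d\<^sub>v\<close> in-edges of \<open>v\<close> are spread along the chain
  \<open>v\<^bsub>d-2\<^esub> \<rightarrow> \<dots> \<rightarrow> v\<^sub>1 \<rightarrow> v\<close>: \<open>v\<close> and every \<open>v\<^sub>i\<close> now receive exactly two edges, while
  the in-edges of all other vertices are untouched.  Every \<open>v\<^sub>i\<close> reaches \<open>v\<close> along the
  chain and is reached from the source of \<open>e\<^sub>i\<close>; hence each edge of \<open>G\<close> lifts to a path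
  of the lag with the same endpoints, and transitivity is inherited.\<close>

lemma edge_relI: "e \<in> E \<Longrightarrow> (s e, r e) \<in> edge_rel E r s"
  unfolding edge_rel_def by blast

lemma lag_s_simps [simp]:
  "lag_s s (Inl e) = Inl (s e)"
  "lag_s s (Inr i) = Inr i"
  by (simp_all add: lag_s_def)

lemma lag_r_Inr [simp]: "lag_r E r v ord (Inr i) = (if i = 1 then Inl v else Inr (i - 1))"
  by (simp add: lag_r_def)

lemma lag_r_Inl_not_v: "r e \<noteq> v \<Longrightarrow> lag_r E r v ord (Inl e) = Inl (r e)"
  by (simp add: lag_r_def)

locale vertex_lag =
  fixes V :: "'v set" and E :: "'e set" and r s :: "'e \<Rightarrow> 'v"
    and v :: 'v and ord :: "nat \<Rightarrow> 'e"
  assumes digraph: "digraph V E r s"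
    and v_in_V: "v \<in> V"
    and in_degree_v: "3 \<le> in_degree E r v"
    and ord_bij: "bij_betw ord {0..<in_degree E r v} {e \<in> E. r e = v}"
begin

abbreviation "d \<equiv> in_degree E r v"
abbreviation "V' \<equiv> lag_V V E r v"
abbreviation "E' \<equiv> lag_E E r v"
abbreviation "r' \<equiv> lag_r E r v ord"
abbreviation "s' \<equiv> lag_s s"

lemma ord_in_edges: "j < d \<Longrightarrow> ord j \<in> E \<and> r (ord j) = v"
  using ord_bij by (auto simp: bij_betw_def)

lemma in_edges_v: "{e \<in> E. r e = v} = ord ` {0..<d}"
  using ord_bij by (simp add: bij_betw_def)

lemma lag_r_ord: "j < d \<Longrightarrow> r' (Inl (ord j)) = (if j = 0 then Inl v else Inr (min j (d - 2)))"
  using ord_in_edges the_inv_into_f_f[OF bij_betw_imp_inj_on[OF ord_bij]]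
  by (simp add: lag_r_def min_def)

lemma lag_E_split: "E' = Inl ` {e \<in> E. r e \<noteq> v} \<union> (Inl \<circ> ord) ` {0..<d} \<union> Inr ` {1..d-2}"
  using in_edges_v by (auto simp: lag_E_def image_comp[symmetric])

lemma lag_in_edges: "{x \<in> E'. r' x = y} =
    Inl ` {e \<in> E. r e \<noteq> v \<and> Inl (r e) = y}
    \<union> (Inl \<circ> ord) ` {j \<in> {0..<d}. (if j = 0 then Inl v else Inr (min j (d - 2))) = y}
    \<union> Inr ` {i \<in> {1..d-2}. (if i = 1 then Inl v else Inr (i - 1)) = y}"
  unfolding lag_E_split by (auto simp: lag_r_Inl_not_v lag_r_ord)

lemma lag_digraph: "digraph V' E' r' s'"
  using digraph v_in_V in_degree_v ord_in_edges
  by (fastforce simp: digraph_def lag_E_split lag_V_def lag_r_ord lag_r_Inl_not_v)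

lemma new_vertex_reaches_v: "i \<in> {1..d-2} \<Longrightarrow> (Inr i, Inl v) \<in> (edge_rel E' r' s')\<^sup>*"
proof (induction i)
  case 0
  then show ?case by simp
next
  case (Suc i)
  have "(Inr (Suc i), r' (Inr (Suc i))) \<in> edge_rel E' r' s'"
    using edge_relI[of "Inr (Suc i)" E' s' r'] Suc.prems by (simp add: lag_E_def)
  then show ?case
    using Suc by (cases "i = 0") (auto intro: converse_rtrancl_into_rtrancl)
qed

lemma lag_r_Inl_reaches_range: "e \<in> E \<Longrightarrow> (r' (Inl e), Inl (r e)) \<in> (edge_rel E' r' s')\<^sup>*"
proof (cases "r e = v")
  case True
  assume "e \<in> E"
  with True in_edges_v have "e \<in> ord ` {0..<d}" by blast
  then obtain j where "j < d" "e = ord j" by auto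
  then show ?thesis
    using True in_degree_v new_vertex_reaches_v[of "min j (d - 2)"] by (simp add: lag_r_ord)
qed (simp add: lag_r_Inl_not_v)

lemma lag_lifts_paths:
  assumes "(u, w) \<in> (edge_rel E r s)\<^sup>*"
  shows "(Inl u, Inl w) \<in> (edge_rel E' r' s')\<^sup>*"
  using assms
proof (induction rule: rtrancl_induct)
  case (step y z)
  then obtain e where e: "e \<in> E" "y = s e" "z = r e"
    by (auto simp: edge_rel_def)
  then have "(Inl y, r' (Inl e)) \<in> edge_rel E' r' s'"
    using edge_relI[of "Inl e" E' s' r'] by (simp add: lag_E_def)
  then show ?case
    using step.IH lag_r_Inl_reaches_range[OF e(1)] e(3) by (meson rtrancl_trans r_into_rtrancl)
qed simp

lemma edge_to_new_vertex:
  assumes "i \<in> {1..d-2}"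
  shows "(Inl (s (ord i)), Inr i) \<in> edge_rel E' r' s'"
proof -
  have "i < d" using assms in_degree_v by auto
  then have "Inl (ord i) \<in> E'" and "r' (Inl (ord i)) = Inr i"
    using assms ord_in_edges by (auto simp: lag_E_def lag_r_ord)
  then show ?thesis using edge_relI[of "Inl (ord i)" E' s' r'] by simp
qed

lemma lag_vertex_reaches_old:
  assumes "x \<in> V'"
  shows "\<exists>u\<in>V. (x, Inl u) \<in> (edge_rel E' r' s')\<^sup>*"
  using assms unfolding lag_V_def
proof (elim UnE imageE)
  fix i assume "x = Inr i" "i \<in> {1..d-2}"
  then show ?thesis using v_in_V new_vertex_reaches_v by blast
qed blast

lemma lag_vertex_reached_from_old:
  assumes "y \<in> V'"
  shows "\<exists>w\<in>V. (Inl w, y) \<in> (edge_rel E' r' s')\<^sup>*"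
  using assms unfolding lag_V_def
proof (elim UnE imageE)
  fix i assume i: "y = Inr i" "i \<in> {1..d-2}"
  then have "s (ord i) \<in> V"
    using ord_in_edges[of i] digraph in_degree_v by (auto simp: digraph_def)
  then show ?thesis using i edge_to_new_vertex by blast
qed blast

lemma lag_transitive:
  assumes "transitive_graph V E r s"
  shows "transitive_graph V' E' r' s'"
  unfolding transitive_graph_def
proof (intro ballI)
  fix x y assume "x \<in> V'" "y \<in> V'"
  then obtain u w where "u \<in> V" "(x, Inl u) \<in> (edge_rel E' r' s')\<^sup>*"
    and "w \<in> V" "(Inl w, y) \<in> (edge_rel E' r' s')\<^sup>*"
    using lag_vertex_reaches_old lag_vertex_reached_from_old by meson
  then show "(x, y) \<in> (edge_rel E' r' s')\<^sup>*"
    using assms lag_lifts_paths unfolding transitive_graph_def by (meson rtrancl_trans)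
qed

lemma in_degree_lag_Inl: "in_degree E' r' (Inl u) = (if u = v then 2 else in_degree E r u)"
proof (cases "u = v")
  case True
  then have "{x \<in> E'. r' x = Inl u} = {Inl (ord 0), Inr 1}"
    using in_degree_v unfolding lag_in_edges by (auto split: if_splits)
  then show ?thesis using True by (simp add: in_degree_def)
next
  case False
  then have "{x \<in> E'. r' x = Inl u} = Inl ` {e \<in> E. r e = u}"
    unfolding lag_in_edges by (auto split: if_splits)
  then show ?thesis using False by (simp add: in_degree_def card_image)
qed

lemma in_degree_lag_new:
  assumes i: "i \<in> {1..d-2}"
  shows "in_degree E' r' (Inr i) = 2"
proof -
  have "{j \<in> {0..<d}. (if j = 0 then Inl v else Inr (min j (d - 2))) = Inr i}
      = (if i = d - 2 then {d - 2, d - 1} else {i})"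
    using i in_degree_v by (auto simp: min_def split: if_split_asm)
  moreover have "{k \<in> {1..d-2}. (if k = 1 then Inl v else Inr (k - 1)) = Inr i}
      = (if i = d - 2 then {} else {i + 1})"
    using i by (auto split: if_split_asm)
  ultimately have in_edges: "{x \<in> E'. r' x = Inr i}
      = (if i = d - 2 then {Inl (ord (d - 2)), Inl (ord (d - 1))} else {Inl (ord i), Inr (i + 1)})"
    unfolding lag_in_edges by (simp add: insert_commute)
  have "ord (d - 2) \<noteq> ord (d - 1)"
    using bij_betw_imp_inj_on[OF ord_bij] in_degree_v by (simp add: inj_on_eq_iff)
  then show ?thesis
    by (simp add: in_degree_def in_edges)
qed

lemma lag_in_degree_ge_2:
  assumes "\<forall>u\<in>V. 2 \<le> in_degree E r u" and "x \<in> V'"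
  shows "2 \<le> in_degree E' r' x"
  using assms by (auto simp: lag_V_def in_degree_lag_Inl in_degree_lag_new)

lemma lag_high_in_degree_vertices:
  "{x \<in> V'. 3 \<le> in_degree E' r' x} = Inl ` ({u \<in> V. 3 \<le> in_degree E r u} - {v})"
  by (auto simp: lag_V_def in_degree_lag_Inl in_degree_lag_new split: if_splits)

lemma card_lag_high_in_degree_vertices:
  assumes "finite V"
  shows "card {x \<in> V'. 3 \<le> in_degree E' r' x} + 1 = card {u \<in> V. 3 \<le> in_degree E r u}"
proof -
  let ?H = "{u \<in> V. 3 \<le> in_degree E r u}"
  have "Suc (card (?H - {v})) = card ?H"
    using assms v_in_V in_degree_v by (intro card_Suc_Diff1) auto
  then show ?thesis by (simp add: lag_high_in_degree_vertices card_image)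
qed

end

theorem lemma3p6:
  fixes V :: "'v set" and E :: "'e set" and r s :: "'e \<Rightarrow> 'v"
    and v :: 'v and ord :: "nat \<Rightarrow> 'e"
  assumes "digraph V E r s"
    and "finite V" and "finite E"
    and "transitive_graph V E r s"
    and "\<forall>u\<in>V. in_degree E r u \<ge> 2"
    and "v \<in> V" and "in_degree E r v \<ge> 3"
    and "bij_betw ord {0..<in_degree E r v} {e \<in> E. r e = v}"
  shows "digraph (lag_V V E r v) (lag_E E r v) (lag_r E r v ord) (lag_s s)
    \<and> finite (lag_V V E r v) \<and> finite (lag_E E r v)
    \<and> transitive_graph (lag_V V E r v) (lag_E E r v) (lag_r E r v ord) (lag_s s)
    \<and> (\<forall>u\<in>lag_V V E r v. in_degree (lag_E E r v) (lag_r E r v ord) u \<ge> 2)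
    \<and> card {u \<in> lag_V V E r v. in_degree (lag_E E r v) (lag_r E r v ord) u \<ge> 3} + 1
      = card {u \<in> V. in_degree E r u \<ge> 3}"
proof -
  interpret vertex_lag V E r s v ord
    using assms(1,6,7,8) by unfold_locales
  show ?thesis
    using lag_digraph lag_transitive[OF assms(4)] lag_in_degree_ge_2[OF assms(5)]
      card_lag_high_in_degree_vertices[OF assms(2)] assms(2,3)
    by (simp add: lag_V_def lag_E_def)
qed

end
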